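(* Let $n\ge1$. Let $(\mu_b)_{0\ne b\in\mathbb N^p,\ \mathrm{ht}(\underline b)<n}$ be a family of elements of $k$ and $(u^b)_{0\ne b\in\mathbb N^p,\ \mathrm{ht}(\underline b)<n}$ a family of elements of $k[\Gamma]$ such that for all such $b$ $$u^b=\mu_b(1-h^b)+\sum_{d,e\ne0,\ \underline d+\underline e=\underline b}t^b_{d,e}\mu_du^e,\qquad \Delta(u^b)=h^b\otimes u^b+u^b\otimes1+\sum_{d,e\ne0,\ \underline d+\underline e=\underline b}t^b_{d,e}u^dh^e\otimes u^e.$$ Let $a\in\mathbb N^p$ with $\mathrm{ht}(\underline a)=n$ and $u^a\in k[\Gamma]$. Then the following are equivalent: (i) $u^a=\mu_a(1-h^a)+\sum_{b,c\ne0,\ \underline b+\underline c=\underline a}t^a_{b,c}\mu_bu^c$ for some $\mu_a\in k$; (ii) $\Delta(u^a)=h^a\otimes u^a+u^a\otimes1+\sum_{b,c\ne0,\ \underline b+\underline c=\underline a}t^a_{b,c}u^bh^c\otimes u^c$.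
   Context: $k$ algebraically closed of characteristic $0$. $\mathcal D=\mathcal D(\Gamma,(g_i),(\chi_i),(a_{ij}))$ is a connected datum of finite Cartan type (i.e. $g_i\in\Gamma$, $\chi_i$ characters of the finite abelian group $\Gamma$, $(a_{ij})$ a connected Cartan matrix of finite type, $q_{ij}=\chi_j(g_i)$, $q_{ij}q_{ji}=q_{ii}^{a_{ij}}$, $q_{ii}\ne1$) such that each $q_{ii}$ has odd order, prime to 3 in type $G_2$; $N$ is the common order of the $q_{ii}$. $\Phi^+=\{\beta_1,\dots,\beta_p\}$ is the set of positive roots in the convex order given by a fixed reduced expression of the longest Weyl group element; for $\alpha=\sum n_i\alpha_i$, $g_\alpha=\prod g_i^{n_i}$, $\chi_\alpha=\prod\chi_i^{n_i}$, $\mathrm{ht}(\alpha)=\sum n_i$. $R(\mathcal D)$ is the tensor algebra $k\langle x_1,\dots,x_\theta\rangle$ (braided Hopf algebra in Yetter–Drinfeld modules over $\Gamma$, $x_i$ primitive of $\Gamma$-degree $g_i$ and weight $\chi_i$, braiding $c(x\otimes y)=\chi_\beta(g_\alpha)y\otimes x$ for $x,y$ of $\mathbb Z^\theta$-degrees $\alpha,\beta$) modulo the quantum Serre relations $\mathrm{ad}_c(x_i)^{1-a_{ij}}(x_j)$, $i\ne j$; $x_{\beta_l}$ are the root vectors (the iterated braided commutators corresponding to Lusztig's PBW root vectors). Put $z_l=x_{\beta_l}^N$, $h_l=g_{\beta_l}^N$, and for $a\in\mathbb N^p$: $z^a=z_1^{a_1}\cdots z_p^{a_p}$, $h^a=h_1^{a_1}\cdots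 h_p^{a_p}$, $\underline a=\sum a_l\beta_l\in\mathbb Z^\theta$. The subalgebra $K(\mathcal D)$ generated by the $z_l$ is a braided Hopf subalgebra with basis $(z^a)_{a\in\mathbb N^p}$, and $t^a_{b,c}\in k$ ($0\ne b,c$) are the unique scalars with $\Delta_{K(\mathcal D)}(z^a)=z^a\otimes1+1\otimes z^a+\sum_{b,c\ne0,\underline b+\underline c=\underline a}t^a_{b,c}z^b\otimes z^c$. $\Delta$ in the claim is the comultiplication of the group algebra $k[\Gamma]$. *)

theory Defs
  imports Main
begin

text \<open>The finite abelian group Gamma is a type 'g of class ab_group_add (written additively,
 so group products become sums and the unit is 0).  The group algebra k[Gamma] is
 the function space 'g => 'k (coefficient functions); k[Gamma] (x) k[Gamma] is identified
 with functions 'g * 'g => 'k.  Elements of N^p are functions nat => nat vanishing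
 from p on; elements of Z^theta (positive-root coordinates) are functions nat => nat
 vanishing from theta on.  beta l i is the coefficient of alpha_i in beta_(l+1).\<close>

definition NP :: "nat \<Rightarrow> (nat \<Rightarrow> nat) set" where
  "NP p = {a. \<forall>l\<ge>p. a l = 0}"

definition zvec :: "nat \<Rightarrow> nat" where
  "zvec = (\<lambda>_. 0)"

definition ul :: "nat \<Rightarrow> (nat \<Rightarrow> nat \<Rightarrow> nat) \<Rightarrow> (nat \<Rightarrow> nat) \<Rightarrow> (nat \<Rightarrow> nat)" where
  "ul p \<beta> a = (\<lambda>i. \<Sum>l<p. a l * \<beta> l i)"

definition ht :: "nat \<Rightarrow> (nat \<Rightarrow> nat) \<Rightarrow> nat" where
  "ht \<theta> \<alpha> = (\<Sum>i<\<theta>. \<alpha> i)"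

definition gmul :: "nat \<Rightarrow> 'g::ab_group_add \<Rightarrow> 'g" where
  "gmul n x = (\<Sum>j<n. x)"

definition galpha :: "nat \<Rightarrow> (nat \<Rightarrow> 'g::ab_group_add) \<Rightarrow> (nat \<Rightarrow> nat) \<Rightarrow> 'g" where
  "galpha \<theta> g \<alpha> = (\<Sum>i<\<theta>. gmul (\<alpha> i) (g i))"

definition hpow :: "nat \<Rightarrow> (nat \<Rightarrow> 'g::ab_group_add) \<Rightarrow> nat \<Rightarrow> nat \<Rightarrow> (nat \<Rightarrow> nat \<Rightarrow> nat)
    \<Rightarrow> (nat \<Rightarrow> nat) \<Rightarrow> 'g" where
  "hpow \<theta> g N p \<beta> a = (\<Sum>l<p. gmul (a l) (gmul N (galpha \<theta> g (\<beta> l))))"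

definition splits :: "nat \<Rightarrow> (nat \<Rightarrow> nat \<Rightarrow> nat) \<Rightarrow> (nat \<Rightarrow> nat)
    \<Rightarrow> ((nat \<Rightarrow> nat) \<times> (nat \<Rightarrow> nat)) set" where
  "splits p \<beta> a = {(b, c). b \<in> NP p \<and> c \<in> NP p \<and> b \<noteq> zvec \<and> c \<noteq> zvec \<and>
       (\<lambda>i. ul p \<beta> b i + ul p \<beta> c i) = ul p \<beta> a}"

definition gdelta :: "'g \<Rightarrow> 'g \<Rightarrow> 'k::field" where
  "gdelta x = (\<lambda>y. if y = x then 1 else 0)"

definition gconv :: "('g::{ab_group_add,finite} \<Rightarrow> 'k::field) \<Rightarrow> ('g \<Rightarrow> 'k) \<Rightarrow> 'g \<Rightarrow> 'k" where
  "gconv f h = (\<lambda>x. \<Sum>y\<in>UNIV. f y * h (x - y))"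

definition gtens :: "('g \<Rightarrow> 'k::field) \<Rightarrow> ('g \<Rightarrow> 'k) \<Rightarrow> 'g \<times> 'g \<Rightarrow> 'k" where
  "gtens f h = (\<lambda>(x, y). f x * h y)"

definition gcomult :: "('g \<Rightarrow> 'k::field) \<Rightarrow> 'g \<times> 'g \<Rightarrow> 'k" where
  "gcomult f = (\<lambda>(x, y). if x = y then f x else 0)"

text \<open>Abstraction of the coproduct of K(D): full structure constants of
  Delta(z^a) = z^a (x) 1 + 1 (x) z^a + sum t^a_{b,c} z^b (x) z^c  (with z^0 = 1), and
  coassociativity (Delta (x) id) Delta = (id (x) Delta) Delta on the basis (z^a).\<close>
definition tfull :: "nat \<Rightarrow> (nat \<Rightarrow> nat \<Rightarrow> nat)
    \<Rightarrow> ((nat \<Rightarrow> nat) \<Rightarrow> (nat \<Rightarrow> nat) \<Rightarrow> (nat \<Rightarrow> nat) \<Rightarrow> 'k::field)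
    \<Rightarrow> (nat \<Rightarrow> nat) \<Rightarrow> (nat \<Rightarrow> nat) \<Rightarrow> (nat \<Rightarrow> nat) \<Rightarrow> 'k" where
  "tfull p \<beta> t a b c =
     (if b = zvec then (if c = a then 1 else 0)
      else if c = zvec then (if b = a then 1 else 0)
      else if (b, c) \<in> splits p \<beta> a then t a b c else 0)"

definition below :: "nat \<Rightarrow> (nat \<Rightarrow> nat \<Rightarrow> nat) \<Rightarrow> (nat \<Rightarrow> nat) \<Rightarrow> (nat \<Rightarrow> nat) set" where
  "below p \<beta> a = {y \<in> NP p. \<forall>i. ul p \<beta> y i \<le> ul p \<beta> a i}"

definition coassoc_coeffs :: "nat \<Rightarrow> (nat \<Rightarrow> nat \<Rightarrow> nat)
    \<Rightarrow> ((nat \<Rightarrow> nat) \<Rightarrow> (nat \<Rightarrow> nat) \<Rightarrow> (nat \<Rightarrow> nat) \<Rightarrow> 'k::field) \<Rightarrow> bool" where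
  "coassoc_coeffs p \<beta> t =
     (\<forall>a\<in>NP p. \<forall>x\<in>NP p. \<forall>w\<in>NP p. \<forall>z\<in>NP p.
        (\<Sum>y\<in>below p \<beta> a. tfull p \<beta> t a y z * tfull p \<beta> t y x w)
      = (\<Sum>y\<in>below p \<beta> a. tfull p \<beta> t a x y * tfull p \<beta> t y w z))"

end

(* Let S = sum t^a_{b,c} mu_b u^c.  Compute Delta(S) - h^a (x) S - S (x) 1 by expanding each
   Delta(u^c) with the hypotheses on elements of smaller height, and rewrite the sum in (ii) with
   the hypotheses on the u^b: the results agree except for a double sum over iterated splittings
   of a taken in the two opposite orders, which coassociativity of the t's identifies.  So S
   satisfies (ii), and u^a satisfies (ii) iff u^a - S is (h^a, 1)-skew primitive; in k[Gamma]
   these are exactly the multiples of 1 - h^a, which is (i). *)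

theory Submission
  imports Defs
begin

lemma gmul_0 [simp]: "gmul 0 x = (0::'g::ab_group_add)"
  by (simp add: gmul_def)

lemma gmul_Suc [simp]: "gmul (Suc n) x = gmul n x + (x::'g::ab_group_add)"
  by (simp add: gmul_def)

lemma gmul_add: "gmul (m + n) x = gmul m x + gmul n (x::'g::ab_group_add)"
  by (induction n) (simp_all add: add.assoc)

lemma gmul_mult: "gmul (m * n) x = gmul m (gmul n (x::'g::ab_group_add))"
  by (induction m) (simp_all add: gmul_add add.commute)

lemma gmul_plus: "gmul n (x + y) = gmul n x + gmul n (y::'g::ab_group_add)"
  by (simp add: gmul_def sum.distrib)

lemma gmul_sum: "gmul n (sum f A) = (\<Sum>i\<in>A. gmul n (f i :: 'g::ab_group_add))"
  unfolding gmul_def by (rule sum.swap)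

lemma sum_gmul: "finite A \<Longrightarrow> gmul (sum f A) x = (\<Sum>i\<in>A. gmul (f i) (x::'g::ab_group_add))"
  by (induction A rule: finite_induct) (simp_all add: gmul_add)

lemma hpow_eq_gmul_galpha: "hpow \<theta> g N p \<beta> a = gmul N (galpha \<theta> g (ul p \<beta> a))"
proof -
  have "hpow \<theta> g N p \<beta> a = (\<Sum>l<p. \<Sum>i<\<theta>. gmul (N * (a l * \<beta> l i)) (g i))"
    unfolding hpow_def galpha_def
    by (simp add: gmul_sum gmul_mult[symmetric] mult.commute mult.left_commute)
  also have "\<dots> = (\<Sum>i<\<theta>. \<Sum>l<p. gmul (N * (a l * \<beta> l i)) (g i))"
    by (rule sum.swap)
  also have "\<dots> = gmul N (galpha \<theta> g (ul p \<beta> a))"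
    unfolding galpha_def ul_def
    by (simp add: gmul_sum gmul_mult[symmetric] sum_gmul sum_distrib_left)
  finally show ?thesis .
qed

lemma hpow_splits_add:
  assumes "(b, c) \<in> splits p \<beta> a"
  shows "hpow \<theta> g N p \<beta> a = hpow \<theta> g N p \<beta> b + hpow \<theta> g N p \<beta> c"
proof -
  have "ul p \<beta> a = (\<lambda>i. ul p \<beta> b i + ul p \<beta> c i)"
    using assms by (simp add: splits_def)
  then show ?thesis
    unfolding hpow_eq_gmul_galpha galpha_def by (simp add: gmul_add sum.distrib gmul_plus)
qed

section \<open>Skew-primitive elements of the group algebra\<close>

lemma gconv_gdelta: "gconv f (gdelta h) x = (f (x - h) :: 'k::field)"
proof -
  have "gconv f (gdelta h) x = (\<Sum>y\<in>UNIV. if y = x - h then f y else 0)"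
    unfolding gconv_def gdelta_def by (rule sum.cong) auto
  then show ?thesis by simp
qed

lemma gtens_gconv_gdelta: "gtens (gconv f (gdelta h)) w (x, y) = (f (x - h) * w y :: 'k::field)"
  by (simp add: gtens_def gconv_gdelta)

definition skew_defect :: "'g::ab_group_add \<Rightarrow> ('g \<Rightarrow> 'k::field) \<Rightarrow> 'g \<times> 'g \<Rightarrow> 'k" where
  "skew_defect h w xy = gcomult w xy - gtens (gdelta h) w xy - gtens w (gdelta 0) xy"

lemma gcomult_eq_iff_skew_defect:
  fixes u :: "'i \<Rightarrow> 'g::{ab_group_add, finite} \<Rightarrow> 'k::field"
  shows "gcomult w (x, y) = gtens (gdelta h) w (x, y) + gtens w (gdelta 0) (x, y)
           + (\<Sum>(b, c)\<in>A. s b c * gtens (gconv (u b) (gdelta (k c))) (u c) (x, y))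
     \<longleftrightarrow> skew_defect h w (x, y) = (\<Sum>(b, c)\<in>A. s b c * (u b (x - k c) * u c y))"
  unfolding skew_defect_def gtens_gconv_gdelta by (auto simp: algebra_simps)

lemma skew_defect_diff:
  "skew_defect h (\<lambda>x. w x - s x) (x, y) = skew_defect h w (x, y) - skew_defect h s (x, y)"
  unfolding skew_defect_def gcomult_def gtens_def by (auto simp: algebra_simps)

lemma skew_defect_sum:
  "skew_defect h (\<lambda>x. \<Sum>i\<in>A. f i x) (x, y) = (\<Sum>i\<in>A. skew_defect h (f i) (x, y))"
  unfolding skew_defect_def gcomult_def gtens_def
  by (auto simp: sum_distrib_left sum_distrib_right sum_subtractf)

lemma skew_defect_scale:
  "skew_defect h (\<lambda>x. k * w x) (x, y) = k * skew_defect h w (x, y)"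
  unfolding skew_defect_def gcomult_def gtens_def by (auto simp: algebra_simps)

lemma skew_defect_change_base:
  "skew_defect h w (x, y) = skew_defect h' w (x, y) + (gdelta h' x - gdelta h x) * w y"
  unfolding skew_defect_def gtens_def by (simp add: algebra_simps)

lemma skew_defect_one_minus_gdelta:
  "skew_defect h (\<lambda>x. m * (gdelta 0 x - gdelta h x)) (x, y) = 0"
  unfolding skew_defect_def gcomult_def gtens_def gdelta_def by (auto simp: algebra_simps)

lemma skew_primitive_eq_multiple:
  fixes v :: "'g::ab_group_add \<Rightarrow> 'k::field"
  assumes "\<And>x y. skew_defect h v (x, y) = 0"
  shows "v x = v 0 * (gdelta 0 x - gdelta h x)"
proof -
  have v: "(if x = y then v x else 0) = (if x = h then v y else 0) + (if y = 0 then v x else 0)"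
    for x y using assms[of x y]
    unfolding skew_defect_def gcomult_def gtens_def gdelta_def by (auto simp: algebra_simps)
  show ?thesis
  proof (cases "h = 0")
    case True
    then have "v 0 = v 0 + v 0" using v[of 0 0] by simp
    then have "v 0 = 0" by (metis add_cancel_left_right)
    moreover have "x \<noteq> 0 \<Longrightarrow> v x = 0" using v[of x x] True by simp
    ultimately show ?thesis using True by (cases "x = 0") (auto simp: gdelta_def)
  next
    case False
    then have "v h = - v 0" using v[of h 0] by (simp add: eq_neg_iff_add_eq_0 add.commute)
    moreover have "x \<noteq> 0 \<Longrightarrow> x \<noteq> h \<Longrightarrow> v x = 0" using v[of x x] by simp
    ultimately show ?thesis using False by (auto simp: gdelta_def)
  qed
qed

lemma eq_skew_primitive_plus_iff:
  assumes "\<And>x y. skew_defect h s (x, y) = r x y"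
  shows "(\<exists>m. \<forall>x. v x = m * (gdelta 0 x - gdelta h x) + s x) \<longleftrightarrow> (\<forall>x y. skew_defect h v (x, y) = r x y)"
proof
  assume "\<exists>m. \<forall>x. v x = m * (gdelta 0 x - gdelta h x) + s x"
  then obtain m where "v = (\<lambda>x. m * (gdelta 0 x - gdelta h x) + s x)" by auto
  then show "\<forall>x y. skew_defect h v (x, y) = r x y"
    using skew_defect_diff[of h "\<lambda>x. m * (gdelta 0 x - gdelta h x) + s x" s] assms
    by (simp add: skew_defect_one_minus_gdelta)
next
  assume "\<forall>x y. skew_defect h v (x, y) = r x y"
  then have "skew_defect h (\<lambda>x. v x - s x) (x, y) = 0" for x y
    by (simp add: skew_defect_diff assms)
  then have "v x - s x = (v 0 - s 0) * (gdelta 0 x - gdelta h x)" for x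
    by (rule skew_primitive_eq_multiple)
  then show "\<exists>m. \<forall>x. v x = m * (gdelta 0 x - gdelta h x) + s x"
    by (metis diff_add_cancel)
qed

section \<open>Reordering coassociative double sums\<close>

lemma sum_swap3: "(\<Sum>x\<in>A. \<Sum>y\<in>B. \<Sum>z\<in>C. f x y z) = (\<Sum>y\<in>B. \<Sum>z\<in>C. \<Sum>x\<in>A. f x y z)"
  by (subst sum.swap) (rule sum.cong[OF refl], rule sum.swap)

lemma sum_mult_sum_swap3:
  "(\<Sum>x\<in>A. f x * (\<Sum>y\<in>B. \<Sum>z\<in>C. g x y z))
     = (\<Sum>y\<in>B. \<Sum>z\<in>C. \<Sum>x\<in>A. f x * (g x y z :: 'a::comm_semiring_1))"
  by (simp add: sum_distrib_left) (rule sum_swap3)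

lemma sum_coassoc_swap:
  fixes T :: "'b \<Rightarrow> 'b \<Rightarrow> 'b \<Rightarrow> 'a::comm_semiring_1"
  assumes coassoc: "\<And>x w z. x \<in> V \<Longrightarrow> w \<in> V \<Longrightarrow> z \<in> V \<Longrightarrow>
      (\<Sum>y\<in>V. T a x y * T y w z) = (\<Sum>y\<in>V. T a y z * T y x w)"
  shows "(\<Sum>b\<in>V. \<Sum>c\<in>V. T a b c * (\<Sum>d\<in>V. \<Sum>e\<in>V. T c d e * F b d e))
       = (\<Sum>b\<in>V. \<Sum>c\<in>V. T a b c * (\<Sum>d\<in>V. \<Sum>e\<in>V. T b d e * F d e c))"
proof -
  have "(\<Sum>b\<in>V. \<Sum>c\<in>V. T a b c * (\<Sum>d\<in>V. \<Sum>e\<in>V. T c d e * F b d e))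
      = (\<Sum>b\<in>V. \<Sum>d\<in>V. \<Sum>e\<in>V. (\<Sum>c\<in>V. T a b c * T c d e) * F b d e)"
    by (simp only: sum_mult_sum_swap3 sum_distrib_right mult.assoc)
  also have "\<dots> = (\<Sum>b\<in>V. \<Sum>d\<in>V. \<Sum>e\<in>V. (\<Sum>c\<in>V. T a c e * T c b d) * F b d e)"
    by (intro sum.cong refl arg_cong[where f = "\<lambda>s. s * _"] coassoc)
  also have "\<dots> = (\<Sum>c\<in>V. \<Sum>b\<in>V. \<Sum>d\<in>V. (\<Sum>e\<in>V. T a e c * T e b d) * F b d c)"
    by (rule sum_swap3[symmetric])
  also have "\<dots> = (\<Sum>c\<in>V. \<Sum>b\<in>V. T a b c * (\<Sum>d\<in>V. \<Sum>e\<in>V. T b d e * F d e c))"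
    by (simp only: sum_mult_sum_swap3 sum_distrib_right mult.assoc)
  also have "\<dots> = (\<Sum>b\<in>V. \<Sum>c\<in>V. T a b c * (\<Sum>d\<in>V. \<Sum>e\<in>V. T b d e * F d e c))"
    by (rule sum.swap)
  finally show ?thesis .
qed

section \<open>Splittings of root lattice elements\<close>

lemma sum_splits_eq_sum_tfull:
  assumes "finite V" "zvec \<notin> V" "splits p \<beta> y \<subseteq> V \<times> V"
  shows "(\<Sum>(b, c)\<in>splits p \<beta> y. t y b c * G b c) = (\<Sum>b\<in>V. \<Sum>c\<in>V. tfull p \<beta> t y b c * G b c)"
proof -
  have "(\<Sum>(b, c)\<in>splits p \<beta> y. t y b c * G b c) = (\<Sum>(b, c)\<in>splits p \<beta> y. tfull p \<beta> t y b c * G b c)"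
    by (rule sum.cong) (auto simp: tfull_def splits_def)
  also have "\<dots> = (\<Sum>(b, c)\<in>V \<times> V. tfull p \<beta> t y b c * G b c)"
    using assms by (intro sum.mono_neutral_left) (auto simp: tfull_def)
  also have "\<dots> = (\<Sum>b\<in>V. \<Sum>c\<in>V. tfull p \<beta> t y b c * G b c)"
    by (rule sum.cartesian_product[symmetric])
  finally show ?thesis .
qed

locale nonzero_roots =
  fixes \<theta> p :: nat and \<beta> :: "nat \<Rightarrow> nat \<Rightarrow> nat"
  assumes root_nonzero: "l < p \<Longrightarrow> \<exists>i<\<theta>. \<beta> l i \<noteq> 0"
begin

lemma ul_nonzero:
  assumes "y \<in> NP p" "y \<noteq> zvec"
  obtains i where "i < \<theta>" "ul p \<beta> y i > 0"
proof -
  obtain l where l: "y l \<noteq> 0" using assms(2) unfolding zvec_def by auto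
  then have "l < p" using assms(1) unfolding NP_def by (auto simp: not_less[symmetric])
  then obtain i where i: "i < \<theta>" "\<beta> l i \<noteq> 0" using root_nonzero by blast
  have "0 < y l * \<beta> l i" using l i by simp
  also have "\<dots> \<le> ul p \<beta> y i" unfolding ul_def using \<open>l < p\<close> by (intro member_le_sum) auto
  finally show ?thesis using i that by blast
qed

lemma ht_ul_pos: "y \<in> NP p \<Longrightarrow> y \<noteq> zvec \<Longrightarrow> ht \<theta> (ul p \<beta> y) > 0"
  unfolding ht_def by (erule ul_nonzero) (auto intro: sum_pos2)

lemma splits_ht_less:
  assumes "(b, c) \<in> splits p \<beta> a"
  shows "ht \<theta> (ul p \<beta> b) < ht \<theta> (ul p \<beta> a)" "ht \<theta> (ul p \<beta> c) < ht \<theta> (ul p \<beta> a)"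
proof -
  have "ul p \<beta> a = (\<lambda>i. ul p \<beta> b i + ul p \<beta> c i)"
    using assms by (simp add: splits_def)
  then have "ht \<theta> (ul p \<beta> a) = ht \<theta> (ul p \<beta> b) + ht \<theta> (ul p \<beta> c)"
    unfolding ht_def by (simp add: sum.distrib)
  moreover have "ht \<theta> (ul p \<beta> b) > 0" "ht \<theta> (ul p \<beta> c) > 0"
    using assms by (auto simp: splits_def intro: ht_ul_pos)
  ultimately show "ht \<theta> (ul p \<beta> b) < ht \<theta> (ul p \<beta> a)" "ht \<theta> (ul p \<beta> c) < ht \<theta> (ul p \<beta> a)"
    by simp_all
qed

lemma finite_below: "finite (below p \<beta> a)"
proof -
  define K where "K = (\<Sum>i<\<theta>. ul p \<beta> a i)"
  have "y l \<le> K" if "y \<in> below p \<beta> a" "l < p" for y l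
  proof -
    obtain i where i: "i < \<theta>" "\<beta> l i \<noteq> 0" using root_nonzero \<open>l < p\<close> by blast
    have "y l \<le> y l * \<beta> l i" using i by simp
    also have "\<dots> \<le> ul p \<beta> y i" unfolding ul_def using \<open>l < p\<close> by (intro member_le_sum) auto
    also have "\<dots> \<le> ul p \<beta> a i" using that by (simp add: below_def)
    also have "\<dots> \<le> K" unfolding K_def using i by (intro member_le_sum) auto
    finally show ?thesis .
  qed
  then have "below p \<beta> a \<subseteq> {y. \<forall>l. (l \<in> {..<p} \<longrightarrow> y l \<in> {..K}) \<and> (l \<notin> {..<p} \<longrightarrow> y l = 0)}"
    by (auto simp: below_def NP_def)
  then show ?thesis
    by (rule finite_subset) (intro finite_set_of_finite_funs finite_lessThan finite_atMost)
qed

lemma splits_subset_below: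
  assumes "y \<in> below p \<beta> a"
  shows "splits p \<beta> y \<subseteq> (below p \<beta> a - {zvec}) \<times> (below p \<beta> a - {zvec})"
proof (rule subrelI)
  fix d e assume de: "(d, e) \<in> splits p \<beta> y"
  then have "ul p \<beta> d i + ul p \<beta> e i = ul p \<beta> y i" for i
    unfolding splits_def by (auto dest: fun_cong)
  moreover have "ul p \<beta> y i \<le> ul p \<beta> a i" for i
    using assms by (simp add: below_def)
  ultimately show "(d, e) \<in> (below p \<beta> a - {zvec}) \<times> (below p \<beta> a - {zvec})"
    using de unfolding splits_def below_def by (auto, (metis le_add1 le_add2 le_trans)+)
qed

lemma tfull_zvec:
  assumes "x \<in> NP p" "x \<noteq> zvec" "w \<noteq> zvec"
  shows "tfull p \<beta> t zvec x w = 0"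
proof -
  obtain i where "ul p \<beta> x i > 0" using ul_nonzero[OF assms(1,2)] .
  moreover have "ul p \<beta> zvec i = 0" by (simp add: ul_def zvec_def)
  ultimately have "(x, w) \<notin> splits p \<beta> zvec"
    unfolding splits_def by (auto dest: fun_cong[where x = i])
  then show ?thesis using assms by (simp add: tfull_def)
qed

lemma tfull_coassoc_nonzero:
  assumes "coassoc_coeffs p \<beta> t" "a \<in> NP p"
    and V: "V = below p \<beta> a - {zvec}" "x \<in> V" "w \<in> V" "z \<in> V"
  shows "(\<Sum>y\<in>V. tfull p \<beta> t a x y * tfull p \<beta> t y w z)
       = (\<Sum>y\<in>V. tfull p \<beta> t a y z * tfull p \<beta> t y x w)"
proof -
  have NP: "x \<in> NP p" "w \<in> NP p" "z \<in> NP p" and nz: "x \<noteq> zvec" "w \<noteq> zvec" "z \<noteq> zvec"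
    using V by (auto simp: below_def)
  have zvec_below: "zvec \<in> below p \<beta> a"
    by (simp add: below_def NP_def zvec_def ul_def)
  have "(\<Sum>y\<in>below p \<beta> a. tfull p \<beta> t a y z * tfull p \<beta> t y x w)
      = (\<Sum>y\<in>below p \<beta> a. tfull p \<beta> t a x y * tfull p \<beta> t y w z)"
    using assms(1,2) NP unfolding coassoc_coeffs_def by blast
  moreover have "tfull p \<beta> t zvec w z = 0" "tfull p \<beta> t zvec x w = 0"
    using NP nz by (simp_all add: tfull_zvec)
  ultimately show ?thesis
    unfolding V(1) using zvec_below by (simp add: sum.remove[OF finite_below])
qed

lemma sum_splits_coassoc:
  assumes "coassoc_coeffs p \<beta> t" "a \<in> NP p"
  shows "(\<Sum>(b, c)\<in>splits p \<beta> a. t a b c * (\<Sum>(d, e)\<in>splits p \<beta> c. t c d e * F b d e))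
       = (\<Sum>(b, c)\<in>splits p \<beta> a. t a b c * (\<Sum>(d, e)\<in>splits p \<beta> b. t b d e * F d e c))"
proof -
  define V where "V = below p \<beta> a - {zvec}"
  have expand: "(\<Sum>(b, c)\<in>splits p \<beta> y. t y b c * G b c)
      = (\<Sum>b\<in>V. \<Sum>c\<in>V. tfull p \<beta> t y b c * G b c)" if "y \<in> below p \<beta> a" for y G
    unfolding V_def using that finite_below splits_subset_below
    by (intro sum_splits_eq_sum_tfull) auto
  have "a \<in> below p \<beta> a" using assms(2) by (simp add: below_def)
  moreover have "V \<subseteq> below p \<beta> a" by (auto simp: V_def)
  ultimately show ?thesis
    using sum_coassoc_swap[of V "tfull p \<beta> t" a F] tfull_coassoc_nonzero[OF assms V_def]
    by (simp add: expand subset_iff)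
qed

lemma skew_defect_twisted_sum:
  fixes H :: "(nat \<Rightarrow> nat) \<Rightarrow> 'g::ab_group_add" and u :: "(nat \<Rightarrow> nat) \<Rightarrow> 'g \<Rightarrow> 'k::field"
  assumes "coassoc_coeffs p \<beta> t" "a \<in> NP p"
    and H_add: "\<And>b c. (b, c) \<in> splits p \<beta> a \<Longrightarrow> H a = H b + H c"
    and u_left: "\<And>b c x. (b, c) \<in> splits p \<beta> a \<Longrightarrow>
      u b x = \<mu> b * (gdelta 0 x - gdelta (H b) x) + (\<Sum>(d, e)\<in>splits p \<beta> b. t b d e * \<mu> d * u e x)"
    and u_right: "\<And>b c x y. (b, c) \<in> splits p \<beta> a \<Longrightarrow>
      skew_defect (H c) (u c) (x, y) = (\<Sum>(d, e)\<in>splits p \<beta> c. t c d e * (u d (x - H e) * u e y))"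
  shows "skew_defect (H a) (\<lambda>x. \<Sum>(b, c)\<in>splits p \<beta> a. t a b c * \<mu> b * u c x) (x, y)
       = (\<Sum>(b, c)\<in>splits p \<beta> a. t a b c * (u b (x - H c) * u c y))"
proof -
  define A where "A b c = t a b c * \<mu> b * ((gdelta (H c) x - gdelta (H a) x) * u c y)" for b c
  define F where "F b d e = \<mu> b * (u d (x - H e) * u e y)" for b d e
  have "skew_defect (H a) (\<lambda>x. \<Sum>(b, c)\<in>splits p \<beta> a. t a b c * \<mu> b * u c x) (x, y)
      = (\<Sum>(b, c)\<in>splits p \<beta> a. t a b c * \<mu> b * skew_defect (H a) (u c) (x, y))"
    by (simp add: skew_defect_sum skew_defect_scale split_def)
  also have "\<dots> = (\<Sum>(b, c)\<in>splits p \<beta> a. A b c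
      + t a b c * (\<Sum>(d, e)\<in>splits p \<beta> c. t c d e * F b d e))"
  proof (intro sum.cong refl, clarify)
    fix b c assume bc: "(b, c) \<in> splits p \<beta> a"
    show "t a b c * \<mu> b * skew_defect (H a) (u c) (x, y)
        = A b c + t a b c * (\<Sum>(d, e)\<in>splits p \<beta> c. t c d e * F b d e)"
      unfolding skew_defect_change_base[of "H a" _ _ _ "H c"] u_right[OF bc]
      by (simp add: A_def F_def algebra_simps sum_distrib_left split_def)
  qed
  also have "\<dots> = (\<Sum>(b, c)\<in>splits p \<beta> a. A b c
      + t a b c * (\<Sum>(d, e)\<in>splits p \<beta> b. t b d e * F d e c))"
    using sum_splits_coassoc[OF assms(1,2), of F] by (simp add: sum.distrib split_def)
  also have "\<dots> = (\<Sum>(b, c)\<in>splits p \<beta> a. t a b c * (u b (x - H c) * u c y))"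
  proof (intro sum.cong refl, clarify)
    fix b c assume bc: "(b, c) \<in> splits p \<beta> a"
    have shift: "gdelta 0 (x - H c) = gdelta (H c) x" "gdelta (H b) (x - H c) = gdelta (H a) x"
      using H_add[OF bc] by (auto simp: gdelta_def algebra_simps)
    have u_b: "u b (x - H c) = \<mu> b * (gdelta (H c) x - gdelta (H a) x)
        + (\<Sum>(d, e)\<in>splits p \<beta> b. t b d e * \<mu> d * u e (x - H c))"
      unfolding u_left[OF bc, of "x - H c"] shift ..
    show "A b c + t a b c * (\<Sum>(d, e)\<in>splits p \<beta> b. t b d e * F d e c)
        = t a b c * (u b (x - H c) * u c y)"
      unfolding u_b A_def F_def
      by (simp add: algebra_simps sum_distrib_left sum_distrib_right split_def)
  qed
  finally show ?thesis .
qed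

end

theorem lemma2p9:
  fixes \<theta> p N n :: nat
    and g :: "nat \<Rightarrow> 'g::{ab_group_add, finite}"
    and \<beta> :: "nat \<Rightarrow> nat \<Rightarrow> nat"
    and t :: "(nat \<Rightarrow> nat) \<Rightarrow> (nat \<Rightarrow> nat) \<Rightarrow> (nat \<Rightarrow> nat) \<Rightarrow> 'k::field"
    and \<mu> :: "(nat \<Rightarrow> nat) \<Rightarrow> 'k"
    and u :: "(nat \<Rightarrow> nat) \<Rightarrow> 'g \<Rightarrow> 'k"
    and a :: "nat \<Rightarrow> nat"
  assumes roots: "\<forall>l<p. (\<exists>i<\<theta>. \<beta> l i \<noteq> 0) \<and> (\<forall>i\<ge>\<theta>. \<beta> l i = 0)"
    and coassoc: "coassoc_coeffs p \<beta> t"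
    and n_pos: "n \<ge> 1"
    and fam: "\<forall>b\<in>NP p. b \<noteq> zvec \<and> ht \<theta> (ul p \<beta> b) < n \<longrightarrow>
       (\<forall>x. u b x = \<mu> b * (gdelta 0 x - gdelta (hpow \<theta> g N p \<beta> b) x)
                    + (\<Sum>(d, e)\<in>splits p \<beta> b. t b d e * \<mu> d * u e x))
     \<and> (\<forall>x y. gcomult (u b) (x, y) =
            gtens (gdelta (hpow \<theta> g N p \<beta> b)) (u b) (x, y) + gtens (u b) (gdelta 0) (x, y)
          + (\<Sum>(d, e)\<in>splits p \<beta> b.
               t b d e * gtens (gconv (u d) (gdelta (hpow \<theta> g N p \<beta> e))) (u e) (x, y)))"
    and a_NP: "a \<in> NP p"
    and ht_a: "ht \<theta> (ul p \<beta> a) = n"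
  shows "(\<exists>\<mu>a. \<forall>x. u a x = \<mu>a * (gdelta 0 x - gdelta (hpow \<theta> g N p \<beta> a) x)
                    + (\<Sum>(b, c)\<in>splits p \<beta> a. t a b c * \<mu> b * u c x))
     \<longleftrightarrow> (\<forall>x y. gcomult (u a) (x, y) =
            gtens (gdelta (hpow \<theta> g N p \<beta> a)) (u a) (x, y) + gtens (u a) (gdelta 0) (x, y)
          + (\<Sum>(b, c)\<in>splits p \<beta> a.
               t a b c * gtens (gconv (u b) (gdelta (hpow \<theta> g N p \<beta> c))) (u c) (x, y)))"
proof -
  interpret nonzero_roots \<theta> p \<beta> using roots by unfold_locales blast
  let ?H = "hpow \<theta> g N p \<beta>"
  let ?S = "\<lambda>x. \<Sum>(b, c)\<in>splits p \<beta> a. t a b c * \<mu> b * u c x"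
  let ?T = "\<lambda>x y. \<Sum>(b, c)\<in>splits p \<beta> a. t a b c * (u b (x - ?H c) * u c y)"
  have fam_splits: "b \<in> NP p \<and> b \<noteq> zvec \<and> ht \<theta> (ul p \<beta> b) < n"
    "c \<in> NP p \<and> c \<noteq> zvec \<and> ht \<theta> (ul p \<beta> c) < n" if "(b, c) \<in> splits p \<beta> a" for b c
    using that splits_ht_less[OF that] ht_a by (auto simp: splits_def)
  have "skew_defect (?H a) ?S (x, y) = ?T x y" for x y
  proof (rule skew_defect_twisted_sum[OF coassoc a_NP])
    show "?H a = ?H b + ?H c" if "(b, c) \<in> splits p \<beta> a" for b c
      using that by (rule hpow_splits_add)
    show "u b x = \<mu> b * (gdelta 0 x - gdelta (?H b) x) + (\<Sum>(d, e)\<in>splits p \<beta> b. t b d e * \<mu> d * u e x)"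
      if "(b, c) \<in> splits p \<beta> a" for b c x
      using fam fam_splits(1)[OF that] by blast
    show "skew_defect (?H c) (u c) (x, y) = (\<Sum>(d, e)\<in>splits p \<beta> c. t c d e * (u d (x - ?H e) * u e y))"
      if "(b, c) \<in> splits p \<beta> a" for b c x y
      using fam fam_splits(2)[OF that] by (simp add: gcomult_eq_iff_skew_defect)
  qed
  then have "(\<exists>m. \<forall>x. u a x = m * (gdelta 0 x - gdelta (?H a) x) + ?S x)
      \<longleftrightarrow> (\<forall>x y. skew_defect (?H a) (u a) (x, y) = ?T x y)"
    by (rule eq_skew_primitive_plus_iff)
  then show ?thesis
    by (simp only: gcomult_eq_iff_skew_defect)
qed

end
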